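(* Let $\Gamma$ be a finite simplicial graph. If $(a,c)$ is a non-adjacent domination pair in $\Gamma$, $c$ is not isolated, and no vertex adjacent to $c$ dominates $c$, then there is a domination diamond $(a,b,c,d)$ in $\Gamma$.
   Context: For distinct vertices $x,y$, $x$ dominates $y$ ($x>y$) if every vertex adjacent to $y$ is adjacent to or equal to $x$; $(x,y)$ is a non-adjacent domination pair if moreover $x$ and $y$ are not adjacent. A vertex is isolated if it has no neighbours. A domination diamond is a quadruple $(a,b,c,d)$ of distinct vertices with $a\sim b\sim c\sim d\sim a$, $a\not\sim c$, $b\not\sim d$, and $a>c$ ($\sim$ denotes adjacency). *)

theory Defs
  imports Main
begin

definition simple_graph :: "'a set \<Rightarrow> ('a \<Rightarrow> 'a \<Rightarrow> bool) \<Rightarrow> bool" where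
  "simple_graph V E \<longleftrightarrow> finite V \<and> (\<forall>x y. E x y \<longrightarrow> x \<in> V \<and> y \<in> V)
     \<and> (\<forall>x y. E x y \<longrightarrow> E y x) \<and> (\<forall>x. \<not> E x x)"

definition dominates :: "'a set \<Rightarrow> ('a \<Rightarrow> 'a \<Rightarrow> bool) \<Rightarrow> 'a \<Rightarrow> 'a \<Rightarrow> bool" where
  "dominates V E x y \<longleftrightarrow> x \<in> V \<and> y \<in> V \<and> x \<noteq> y \<and>
     (\<forall>z\<in>V. E y z \<longrightarrow> E x z \<or> z = x)"

definition nonadj_domination_pair :: "'a set \<Rightarrow> ('a \<Rightarrow> 'a \<Rightarrow> bool) \<Rightarrow> 'a \<Rightarrow> 'a \<Rightarrow> bool" where
  "nonadj_domination_pair V E x y \<longleftrightarrow> dominates V E x y \<and> \<not> E x y"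

definition isolated :: "'a set \<Rightarrow> ('a \<Rightarrow> 'a \<Rightarrow> bool) \<Rightarrow> 'a \<Rightarrow> bool" where
  "isolated V E v \<longleftrightarrow> (\<forall>z\<in>V. \<not> E v z)"

definition domination_diamond :: "'a set \<Rightarrow> ('a \<Rightarrow> 'a \<Rightarrow> bool) \<Rightarrow> 'a \<Rightarrow> 'a \<Rightarrow> 'a \<Rightarrow> 'a \<Rightarrow> bool" where
  "domination_diamond V E a b c d \<longleftrightarrow> a \<in> V \<and> b \<in> V \<and> c \<in> V \<and> d \<in> V \<and>
     distinct [a, b, c, d] \<and> E a b \<and> E b c \<and> E c d \<and> E d a \<and> \<not> E a c \<and> \<not> E b d \<and>
     dominates V E a c"

end

theory Submission
  imports Defs
begin

text \<open>Pick a neighbour b of c. Since b does not dominate c, some neighbour d of c is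
  neither b nor adjacent to b. As a dominates c and is not adjacent to c, a is adjacent
  to every neighbour of c, in particular to b and d; so a, b, c, d form a diamond.\<close>

lemma simple_graph_sym: "simple_graph V E \<Longrightarrow> E x y \<Longrightarrow> E y x"
  unfolding simple_graph_def by blast

lemma simple_graph_vertices: "simple_graph V E \<Longrightarrow> E x y \<Longrightarrow> x \<in> V \<and> y \<in> V"
  unfolding simple_graph_def by blast

lemma simple_graph_irrefl: "simple_graph V E \<Longrightarrow> \<not> E x x"
  unfolding simple_graph_def by blast

lemma nonadj_dominator_adjacent_to_neighbour:
  assumes "simple_graph V E" and "nonadj_domination_pair V E a c" and "E c z"
  shows "E a z"
proof -
  have "z \<noteq> a"
    using assms(2,3) simple_graph_sym[OF assms(1)] unfolding nonadj_domination_pair_def by blast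
  then show ?thesis
    using assms(2,3) simple_graph_vertices[OF assms(1)]
    unfolding nonadj_domination_pair_def dominates_def by blast
qed

lemma not_dominates_obtain_neighbour:
  assumes "simple_graph V E" and "E b c" and "\<not> dominates V E b c"
  obtains d where "E c d" and "\<not> E b d" and "d \<noteq> b"
  using assms(2,3) simple_graph_irrefl[OF assms(1)] simple_graph_vertices[OF assms(1)]
  unfolding dominates_def by blast

theorem lemma2p11:
  fixes V :: "'a set" and E :: "'a \<Rightarrow> 'a \<Rightarrow> bool" and a c :: 'a
  assumes "simple_graph V E"
    and "nonadj_domination_pair V E a c"
    and "\<not> isolated V E c"
    and "\<forall>x\<in>V. E x c \<longrightarrow> \<not> dominates V E x c"
  shows "\<exists>b d. domination_diamond V E a b c d"
proof -
  note sym = simple_graph_sym[OF assms(1)] and in_V = simple_graph_vertices[OF assms(1)]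
    and irrefl = simple_graph_irrefl[OF assms(1)]
  obtain b where "E c b"
    using assms(3) unfolding isolated_def by blast
  then have "E b c" "b \<in> V"
    using sym in_V by blast+
  then obtain d where "E c d" "\<not> E b d" "d \<noteq> b"
    using assms(4) not_dominates_obtain_neighbour[OF assms(1)] by blast
  have "E a b" "E a d"
    using \<open>E c b\<close> \<open>E c d\<close> nonadj_dominator_adjacent_to_neighbour[OF assms(1,2)] by blast+
  have "a \<noteq> b" "a \<noteq> d" "b \<noteq> c" "c \<noteq> d"
    using \<open>E a b\<close> \<open>E a d\<close> \<open>E b c\<close> \<open>E c d\<close> irrefl by blast+
  moreover have "a \<noteq> c" "\<not> E a c" "dominates V E a c"
    using assms(2) unfolding nonadj_domination_pair_def dominates_def by blast+
  ultimately have "domination_diamond V E a b c d"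
    using \<open>E c b\<close> \<open>E c d\<close> \<open>\<not> E b d\<close> \<open>d \<noteq> b\<close> \<open>E a b\<close> \<open>E a d\<close> sym in_V
    unfolding domination_diamond_def by auto
  then show ?thesis by blast
qed

end
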